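(* Let $Q=(q_n)_{n\ge1}$ be a basic sequence that is infinite in limit, and suppose there exist constants $M$ and $t$ such that $\nu_{i+1}-\nu_i\le Mi$ for all $i>t$. Then $l_i\le\lceil M+1\rceil$ for all $i>t$.
   Context: A basic sequence is a sequence $Q=(q_n)_{n\ge1}$ of integers with $q_n\ge 2$; it is infinite in limit if $q_n\to\infty$. $\mathbb{N}$ denotes the positive integers. For each positive integer $j$ let $\nu_j=\min\{N : q_m\ge 2j^2 \text{ for all } m\ge N\}$. Define $l_1=\max(\nu_2-1,1)$ and, recursively for $i\ge 2$, $l_i=\max\big(\min\{k\in\mathbb{N} : l_1+2l_2+\cdots+(i-1)l_{i-1}+ik\ge \nu_{i+1}-1\},1\big)$. *)

theory Defs
  imports Complex_Main
begin

(* A basic sequence q is indexed from 1: q 1, q 2, ...; the value q 0 is irrelevant. *)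

definition nu :: "(nat \<Rightarrow> int) \<Rightarrow> nat \<Rightarrow> nat" where
  "nu q j = (LEAST N. N \<ge> 1 \<and> (\<forall>m\<ge>N. q m \<ge> 2 * int j ^ 2))"

(* lS q i = (l_i, l_1 + 2 l_2 + ... + i l_i) for i >= 1 *)
fun lS :: "(nat \<Rightarrow> int) \<Rightarrow> nat \<Rightarrow> nat \<times> nat" where
  "lS q 0 = (0, 0)"
| "lS q (Suc 0) = (let k = max (nu q 2 - 1) 1 in (k, k))"
| "lS q (Suc (Suc i)) =
     (let S = snd (lS q (Suc i)); n = Suc (Suc i);
          k = max (LEAST k::nat. k \<ge> 1 \<and> int S + int n * int k \<ge> int (nu q (n + 1)) - 1) 1
      in (k, S + n * k))"

definition l :: "(nat \<Rightarrow> int) \<Rightarrow> nat \<Rightarrow> nat" where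
  "l q i = fst (lS q i)"

end

theory Submission
  imports Defs
begin

text \<open>Write S(i) = l(1) + 2 l(2) + ... + i l(i). The recursion maintains S(i) \<ge> \<nu>(i+1) - 1,
  so if \<nu>(i+1) - \<nu>(i) \<le> c i then k = max c 1 satisfies S(i-1) + i k \<ge> \<nu>(i) - 1 + c i \<ge> \<nu>(i+1) - 1,
  and minimality of l(i) gives l(i) \<le> max c 1 (for i = 1 use \<nu>(1) = 1 instead). Since \<nu> is monotone
  the hypothesis forces M \<ge> 0, and c = \<lceil>M\<rceil> yields the bound.\<close>

lemma nu_spec:
  assumes "filterlim q at_top sequentially"
  shows "nu q j \<ge> 1 \<and> (\<forall>m\<ge>nu q j. q m \<ge> 2 * int j ^ 2)"
proof -
  have "eventually (\<lambda>m. q m \<ge> 2 * int j ^ 2) sequentially"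
    using assms filterlim_at_top by blast
  then obtain N where "\<forall>m\<ge>N. q m \<ge> 2 * int j ^ 2"
    by (auto simp: eventually_sequentially)
  then have "\<exists>N. N \<ge> 1 \<and> (\<forall>m\<ge>N. q m \<ge> 2 * int j ^ 2)"
    by (intro exI[of _ "max N 1"]) auto
  then show ?thesis
    unfolding nu_def by (rule LeastI_ex)
qed

lemma mono_nu:
  assumes "filterlim q at_top sequentially"
  shows "mono (nu q)"
proof (rule monoI)
  fix j j' :: nat
  assume "j \<le> j'"
  then have "2 * int j ^ 2 \<le> 2 * int j' ^ 2"
    by (simp add: power_mono)
  with nu_spec[OF assms, of j']
  have "nu q j' \<ge> 1 \<and> (\<forall>m\<ge>nu q j'. q m \<ge> 2 * int j ^ 2)"
    by (meson order_trans)
  then show "nu q j \<le> nu q j'"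
    unfolding nu_def by (rule Least_le)
qed

lemma nu_1:
  assumes "\<forall>n\<ge>1. q n \<ge> 2"
  shows "nu q 1 = 1"
  unfolding nu_def by (rule Least_equality) (use assms in auto)

lemma l_1: "l q 1 = max (nu q 2 - 1) 1"
  by (simp add: l_def Let_def)

lemma snd_lS_Suc_Suc:
  "snd (lS q (Suc (Suc i))) = snd (lS q (Suc i)) + Suc (Suc i) * l q (Suc (Suc i))"
  by (simp add: l_def Let_def)

lemma l_Suc_Suc_least:
  assumes "k \<ge> 1"
    and "int (nu q (Suc (Suc i) + 1)) - 1 \<le> int (snd (lS q (Suc i))) + int (Suc (Suc i)) * int k"
  shows "l q (Suc (Suc i)) \<le> k"
proof -
  have "(LEAST k. k \<ge> 1 \<and> int (snd (lS q (Suc i))) + int (Suc (Suc i)) * int k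
          \<ge> int (nu q (Suc (Suc i) + 1)) - 1) \<le> k"
    using assms by (intro Least_le) simp
  with assms(1) show ?thesis
    by (simp add: l_def Let_def numeral_3_eq_3)
qed

lemma l_Suc_Suc_admissible:
  "int (nu q (Suc (Suc i) + 1)) - 1 \<le> int (snd (lS q (Suc i))) + int (Suc (Suc i)) * int (l q (Suc (Suc i)))"
proof -
  define S where "S = int (snd (lS q (Suc i)))"
  define P where "P = (\<lambda>k::nat. k \<ge> 1 \<and> S + int (Suc (Suc i)) * int k \<ge> int (nu q (Suc (Suc i) + 1)) - 1)"
  have "P (nu q (Suc (Suc i) + 1) + 1)"
    unfolding P_def S_def by (simp add: algebra_simps)
  then have least: "P (LEAST k. P k)"
    by (rule LeastI)
  have "l q (Suc (Suc i)) = max (LEAST k. P k) 1"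
    unfolding l_def P_def S_def by (simp add: Let_def numeral_3_eq_3)
  then have "int (Suc (Suc i)) * int (LEAST k. P k) \<le> int (Suc (Suc i)) * int (l q (Suc (Suc i)))"
    by (intro mult_left_mono) simp_all
  with least have "int (nu q (Suc (Suc i) + 1)) - 1 \<le> S + int (Suc (Suc i)) * int (l q (Suc (Suc i)))"
    unfolding P_def by linarith
  then show ?thesis
    unfolding S_def .
qed

lemma nu_le_snd_lS: "int (nu q (Suc i + 1)) - 1 \<le> int (snd (lS q (Suc i)))"
proof (induction i)
  case 0
  then show ?case
    by (simp add: Let_def numeral_2_eq_2)
next
  case (Suc i)
  have "int (nu q (Suc (Suc i) + 1)) - 1
        \<le> int (snd (lS q (Suc i))) + int (Suc (Suc i)) * int (l q (Suc (Suc i)))"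
    by (rule l_Suc_Suc_admissible)
  then show ?case
    unfolding snd_lS_Suc_Suc by (simp add: numeral_3_eq_3 algebra_simps)
qed

lemma l_le_if_nu_gap:
  assumes basic: "\<forall>n\<ge>1. q n \<ge> 2"
    and "i \<ge> 1"
    and gap: "int (nu q (i + 1)) - int (nu q i) \<le> int (c * i)"
  shows "l q i \<le> max c 1"
proof (cases "i = 1")
  case True
  with gap nu_1[OF basic] l_1[of q] show ?thesis
    by (simp add: numeral_2_eq_2)
next
  case False
  with \<open>i \<ge> 1\<close> obtain j where i: "i = Suc (Suc j)"
    by (intro that[of "i - 2"]) simp
  have "int (nu q i) - 1 \<le> int (snd (lS q (Suc j)))"
    using nu_le_snd_lS[of q j] i by simp
  moreover have "c * i \<le> i * max c 1"
    by (subst mult.commute) (intro mult_right_mono; simp)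
  then have "int (c * i) \<le> int i * int (max c 1)"
    by (simp only: of_nat_le_iff flip: of_nat_mult)
  ultimately show ?thesis
    using gap unfolding i by (intro l_Suc_Suc_least) linarith+
qed

theorem mainTheorem17:
  fixes q :: "nat \<Rightarrow> int" and M t :: real
  assumes basic: "\<forall>n\<ge>1. q n \<ge> 2"
    and infinite_in_limit: "filterlim q at_top sequentially"
    and gap: "\<forall>i::nat. i \<ge> 1 \<and> real i > t \<longrightarrow>
                real (nu q (i + 1)) - real (nu q i) \<le> M * real i"
  shows "\<forall>i::nat. i \<ge> 1 \<and> real i > t \<longrightarrow> real (l q i) \<le> real_of_int \<lceil>M + 1\<rceil>"
proof (intro allI impI)
  fix i :: nat
  assume i: "i \<ge> 1 \<and> real i > t"
  have gap_i: "real (nu q (i + 1)) - real (nu q i) \<le> M * real i"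
    using gap i by blast
  have "nu q i \<le> nu q (i + 1)"
    using mono_nu[OF infinite_in_limit] by (simp add: monoD)
  with gap_i have "M * real i \<ge> 0"
    by linarith
  with i have "M \<ge> 0"
    by (simp add: zero_le_mult_iff)
  define c where "c = nat \<lceil>M\<rceil>"
  have "M * real i \<le> real c * real i"
    unfolding c_def by (intro mult_right_mono) (simp_all add: real_nat_ceiling_ge)
  with gap_i have "real_of_int (int (nu q (i + 1)) - int (nu q i)) \<le> real_of_int (int (c * i))"
    by simp
  then have "int (nu q (i + 1)) - int (nu q i) \<le> int (c * i)"
    by (simp only: of_int_le_iff)
  then have "l q i \<le> max c 1"
    using l_le_if_nu_gap[OF basic] i by blast
  then show "real (l q i) \<le> real_of_int \<lceil>M + 1\<rceil>"
    using \<open>M \<ge> 0\<close> unfolding c_def by linarith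
qed

end
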